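(* Let $m \le n$ and $1 \le k \le m$. Let $X$ be a normal operator on $\mathcal{H}_n \otimes \mathcal{H}_m$ with spectral decomposition $X = \sum_i \lambda_i |v_i\rangle\langle v_i|$, where $\{|v_i\rangle\}$ is an orthonormal basis of eigenvectors and $\lambda_i$ are the corresponding eigenvalues. Then \[ \|X\|_{S(k)} \le \sum_i |\lambda_i|\, \big\||v_i\rangle\big\|_{s(k)}^2. \]
   Context: $\mathcal{H}_d = \mathbb{C}^d$ and $m\le n$. $SR$ denotes Schmidt rank, i.e. the number of nonzero singular values of the coefficient matrix of a vector in $\mathcal{H}_n\otimes\mathcal{H}_m$. $\big\||v\rangle\big\|_{s(k)} := \sup\{|\langle w|v\rangle| : |w\rangle \text{ unit}, SR(|w\rangle)\le k\}$. By a known result this equals the square root of the sum of squares of the $k$ largest Schmidt coefficients of $|v\rangle$. $\|X\|_{S(k)} := \sup\{|\langle w|X|v\rangle| : |v\rangle,|w\rangle \text{ unit}, SR(|v\rangle),SR(|w\rangle)\le k\}$. *)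

theory Defs
  imports "HOL-Analysis.Analysis"
begin

text \<open>Vectors in H_n (x) H_m are modelled as complex^('n \<times> 'm), with CARD('n) = n,
  CARD('m) = m; the entry at (i,j) is the coefficient of |i>|j>.\<close>

definition cinner :: "complex^'a \<Rightarrow> complex^'a \<Rightarrow> complex" where
  "cinner w v = (\<Sum>a\<in>UNIV. cnj (w $ a) * v $ a)"

definition coeff_mat :: "complex^('n::finite \<times> 'm::finite) \<Rightarrow> complex^'m^'n" where
  "coeff_mat v = (\<chi> i j. v $ (i, j))"

text \<open>Schmidt rank = number of nonzero singular values of the coefficient matrix = its rank.\<close>
definition schmidt_rank :: "complex^('n::finite \<times> 'm::finite) \<Rightarrow> nat" where
  "schmidt_rank v = rank (coeff_mat v)"

definition s_norm :: "nat \<Rightarrow> complex^('n::finite \<times> 'm::finite) \<Rightarrow> real" where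
  "s_norm k v = Sup {cmod (cinner w v) | w. norm w = 1 \<and> schmidt_rank w \<le> k}"

definition S_norm :: "nat \<Rightarrow> complex^('n::finite \<times> 'm::finite)^('n \<times> 'm) \<Rightarrow> real" where
  "S_norm k X = Sup {cmod (cinner w (X *v v)) | v w.
      norm v = 1 \<and> norm w = 1 \<and> schmidt_rank v \<le> k \<and> schmidt_rank w \<le> k}"

definition adjoint_mat :: "complex^'a^'b \<Rightarrow> complex^'b^'a" where
  "adjoint_mat X = (\<chi> i j. cnj (X $ j $ i))"

definition outer :: "complex^'a \<Rightarrow> complex^'a \<Rightarrow> complex^'a^'a" where
  "outer u v = (\<chi> a b. u $ a * cnj (v $ b))"

end

theory Submission
  imports Defs
begin

text \<open>Expanding \<open>\<langle>w|X|v\<rangle> = \<Sum>\<^sub>i \<lambda>\<^sub>i \<langle>w|v\<^sub>i\<rangle>\<langle>v\<^sub>i|v\<rangle>\<close> and bounding each overlap with a unit vector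
  of Schmidt rank at most \<open>k\<close> by \<open>\<parallel>v\<^sub>i\<parallel>\<^sub>s\<^sub>(\<^sub>k\<^sub>)\<close> gives the estimate termwise by the triangle
  inequality.\<close>

lemma cnj_cinner: "cnj (cinner w v) = cinner v w"
  by (simp add: cinner_def mult.commute)

lemma norm_cinner_commute: "cmod (cinner w v) = cmod (cinner v w)"
  by (metis cnj_cinner complex_mod_cnj)

lemma cinner_sum_right: "cinner w (\<Sum>i\<in>I. f i) = (\<Sum>i\<in>I. cinner w (f i))"
  unfolding cinner_def sum_component sum_distrib_left by (rule sum.swap)

lemma cinner_scale_right: "cinner w (c *s v) = c * cinner w v"
  by (simp add: cinner_def sum_distrib_left mult.left_commute)

lemma norm_cinner_le: "cmod (cinner w v) \<le> norm w * norm v"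
proof -
  have "cmod (cinner w v) \<le> (\<Sum>a\<in>UNIV. cmod (w $ a) * cmod (v $ a))"
    unfolding cinner_def by (rule order_trans[OF norm_sum]) (simp add: norm_mult)
  also have "\<dots> \<le> L2_set (\<lambda>a. cmod (w $ a)) UNIV * L2_set (\<lambda>a. cmod (v $ a)) UNIV"
    using L2_set_mult_ineq[of "\<lambda>a. cmod (w $ a)" "\<lambda>a. cmod (v $ a)" UNIV] by simp
  finally show ?thesis by (simp add: norm_vec_def)
qed

lemma spectral_sum_mult_vector:
  fixes vs :: "'a::finite \<Rightarrow> complex^'a"
  assumes "X = (\<Sum>i\<in>UNIV. (\<chi> a b. lam i * outer (vs i) (vs i) $ a $ b))"
  shows "X *v v = (\<Sum>i\<in>UNIV. (lam i * cinner (vs i) v) *s vs i)"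
proof -
  have "(X *v v) $ a = (\<Sum>i\<in>UNIV. lam i * cinner (vs i) v * vs i $ a)" for a
  proof -
    have "(X *v v) $ a = (\<Sum>b\<in>UNIV. \<Sum>i\<in>UNIV. lam i * vs i $ a * cnj (vs i $ b) * v $ b)"
      by (simp add: assms matrix_vector_mult_def sum_component outer_def sum_distrib_right mult.assoc)
    also have "\<dots> = (\<Sum>i\<in>UNIV. \<Sum>b\<in>UNIV. lam i * vs i $ a * cnj (vs i $ b) * v $ b)"
      by (rule sum.swap)
    finally show ?thesis
      by (simp add: cinner_def sum_distrib_left sum_distrib_right ac_simps)
  qed
  then show ?thesis by (simp add: vec_eq_iff sum_component)
qed

lemma cinner_spectral_sum:
  fixes vs :: "'a::finite \<Rightarrow> complex^'a"
  assumes "X = (\<Sum>i\<in>UNIV. (\<chi> a b. lam i * outer (vs i) (vs i) $ a $ b))"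
  shows "cinner w (X *v v) = (\<Sum>i\<in>UNIV. lam i * cinner w (vs i) * cinner (vs i) v)"
  by (simp add: spectral_sum_mult_vector[OF assms] cinner_sum_right cinner_scale_right ac_simps)

lemma schmidt_rank_axis_le_1: "schmidt_rank (axis (i0, j0) (1::complex)) \<le> 1"
proof -
  let ?A = "coeff_mat (axis (i0, j0) (1::complex))"
  have "row i ?A \<in> vec.span {axis j0 1}" for i
  proof (cases "i = i0")
    case True
    then have "row i ?A = axis j0 1" by (auto simp: row_def coeff_mat_def axis_def vec_eq_iff)
    then show ?thesis by (simp add: vec.span_base)
  next
    case False
    then have "row i ?A = 0" by (auto simp: row_def coeff_mat_def axis_def vec_eq_iff)
    then show ?thesis by (simp add: vec.span_zero)
  qed
  then have "rows ?A \<subseteq> vec.span {axis j0 1}" by (auto simp: rows_def)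
  then have "vec.dim (rows ?A) \<le> card {axis j0 (1::complex)}" by (rule vec.dim_le_card) auto
  then show ?thesis by (simp add: schmidt_rank_def row_rank_def_gen)
qed

lemma norm_cinner_le_s_norm:
  assumes "norm w = 1" "schmidt_rank w \<le> k"
  shows "cmod (cinner w v) \<le> s_norm k v"
  unfolding s_norm_def
proof (rule cSup_upper)
  show "cmod (cinner w v) \<in> {cmod (cinner w v) |w. norm w = 1 \<and> schmidt_rank w \<le> k}"
    using assms by blast
  show "bdd_above {cmod (cinner w v) |w. norm w = 1 \<and> schmidt_rank w \<le> k}"
  proof (rule bdd_aboveI)
    fix x assume "x \<in> {cmod (cinner w v) |w. norm w = 1 \<and> schmidt_rank w \<le> k}"
    then obtain w where "x = cmod (cinner w v)" "norm w = 1" by blast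
    then show "x \<le> norm v" using norm_cinner_le[of w v] by simp
  qed
qed

lemma S_norm_le:
  fixes X :: "complex^('n::finite \<times> 'm::finite)^('n \<times> 'm)"
  assumes "1 \<le> k"
    and "\<And>v w. norm v = 1 \<Longrightarrow> schmidt_rank v \<le> k \<Longrightarrow> norm w = 1 \<Longrightarrow> schmidt_rank w \<le> k
           \<Longrightarrow> cmod (cinner w (X *v v)) \<le> B"
  shows "S_norm k X \<le> B"
  unfolding S_norm_def
proof (rule cSup_least)
  let ?e = "axis (undefined, undefined) (1::complex) :: complex^('n \<times> 'm)"
  have "norm ?e = 1" "schmidt_rank ?e \<le> k"
    using schmidt_rank_axis_le_1 assms(1) by (auto simp: norm_axis_1 intro: order_trans)
  then show "{cmod (cinner w (X *v v)) |v w.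
      norm v = 1 \<and> norm w = 1 \<and> schmidt_rank v \<le> k \<and> schmidt_rank w \<le> k} \<noteq> {}"
    by blast
qed (use assms(2) in blast)

theorem proposition4p11:
  fixes X :: "complex^('n::finite \<times> 'm::finite)^('n \<times> 'm)"
    and vs :: "('n \<times> 'm) \<Rightarrow> complex^('n \<times> 'm)"
    and lam :: "('n \<times> 'm) \<Rightarrow> complex"
    and k :: nat
  assumes "CARD('m) \<le> CARD('n)"
    and "1 \<le> k" and "k \<le> CARD('m)"
    and "X ** adjoint_mat X = adjoint_mat X ** X"
    and "\<And>i j. cinner (vs i) (vs j) = (if i = j then 1 else 0)"
    and "X = (\<Sum>i\<in>UNIV. (\<chi> a b. lam i * outer (vs i) (vs i) $ a $ b))"
  shows "S_norm k X \<le> (\<Sum>i\<in>UNIV. cmod (lam i) * (s_norm k (vs i))^2)"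
proof (rule S_norm_le[OF assms(2)])
  fix v w :: "complex^('n \<times> 'm)"
  assume v: "norm v = 1" "schmidt_rank v \<le> k" and w: "norm w = 1" "schmidt_rank w \<le> k"
  have "cmod (lam i * cinner w (vs i) * cinner (vs i) v) \<le> cmod (lam i) * (s_norm k (vs i))^2" for i
  proof -
    have w_i: "cmod (cinner w (vs i)) \<le> s_norm k (vs i)"
      using norm_cinner_le_s_norm[OF w] .
    moreover have "cmod (cinner (vs i) v) \<le> s_norm k (vs i)"
      unfolding norm_cinner_commute[of "vs i" v] by (rule norm_cinner_le_s_norm[OF v])
    ultimately show ?thesis
      by (simp add: norm_mult power2_eq_square mult.assoc mult_left_mono mult_mono' order_trans[OF norm_ge_zero w_i])
  qed
  then have "cmod (\<Sum>i\<in>UNIV. lam i * cinner w (vs i) * cinner (vs i) v)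
      \<le> (\<Sum>i\<in>UNIV. cmod (lam i) * (s_norm k (vs i))^2)"
    by (rule order_trans[OF norm_sum sum_mono])
  then show "cmod (cinner w (X *v v)) \<le> (\<Sum>i\<in>UNIV. cmod (lam i) * (s_norm k (vs i))^2)"
    by (simp add: cinner_spectral_sum[OF assms(6)])
qed

end
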